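(* Let $\theta(q,x):=\sum_{j=0}^{\infty}q^{j(j+1)/2}x^j$, $\Theta^*(q,x):=\sum_{j=-\infty}^{\infty}q^{j(j+1)/2}x^j$ and $G(q,x):=\sum_{j=-\infty}^{-1}q^{j(j+1)/2}x^j$, so that $\theta=\Theta^*-G$. For $q\in[0.5,1)$ and $x$ on the arc $C_2:=\{x\in\mathbb{C}:\ |x|=3,\ \arg x\in[3\pi/4,\pi]\}$, one has $|G(q,x)|>|\Theta^*(q,x)|$, hence $|\theta(q,x)|>0$. *)

theory Defs
  imports "HOL-Analysis.Analysis"
begin

text \<open>Coefficient q^(j(j+1)/2) for integer j; j(j+1)/2 is always a nonnegative integer.\<close>
definition tcoef :: "real \<Rightarrow> int \<Rightarrow> complex" where
  "tcoef q j = complex_of_real (q ^ nat (j * (j + 1) div 2))"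

definition ptheta :: "real \<Rightarrow> complex \<Rightarrow> complex" where
  "ptheta q x = (\<Sum>j. tcoef q (int j) * x ^ j)"

definition Theta_star :: "real \<Rightarrow> complex \<Rightarrow> complex" where
  "Theta_star q x = infsum (\<lambda>j::int. tcoef q j * x powi j) UNIV"

definition Gfun :: "real \<Rightarrow> complex \<Rightarrow> complex" where
  "Gfun q x = infsum (\<lambda>j::int. tcoef q j * x powi j) {..-1}"

end

theory Submission
  imports Defs
begin

text \<open>The proof rests on the Jacobi triple product
  \<open>\<Theta>*(q, x) = (1 + 1/x) \<Prod>\<^sub>m\<^sub>\<ge>\<^sub>1 (1 - q\<^sup>m) (1 + x q\<^sup>m) (1 + q\<^sup>m/x)\<close>,
  obtained as the limit of its finite version, a consequence of Cauchy's q-binomial theorem,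
  by Tannery's theorem. On the arc, \<open>\<bar>x\<bar> = 3\<close> and \<open>Re x \<le> -2.12\<close>, so every factor of the
  product has modulus at most 1, and \<open>\<bar>\<Theta>*\<bar>\<close> is at most \<open>\<bar>1 + 1/x\<bar>\<close> times the first three
  factors; elementary polynomial bounds and a case split over \<open>q \<in> [1/2, 1)\<close> show that this is
  less than 1/6. On the other hand the two leading terms \<open>1/x + q/x\<^sup>2\<close> of G have modulus at
  least 2/9 and the remaining ones contribute at most 1/18, so \<open>\<bar>G\<bar> \<ge> 1/6 > \<bar>\<Theta>*\<bar>\<close>, and
  finally \<open>\<bar>\<theta>\<bar> = \<bar>\<Theta>* - G\<bar> \<ge> \<bar>G\<bar> - \<bar>\<Theta>*\<bar>\<close>.\<close>

section \<open>Gaussian binomial coefficients and q-Pochhammer symbols\<close>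

lemma Suc_choose_two: "Suc k choose 2 = (k choose 2) + k"
  by (simp add: numeral_2_eq_2)

lemma two_mult_choose_two: "2 * (k choose 2) = k * (k - 1)"
proof -
  have "even (k * (k - 1))" by (cases k) auto
  then show ?thesis by (simp add: choose_two)
qed

lemma sum_lessThan_id_eq_choose_two: "(\<Sum>i<n. i) = n choose 2"
  by (induction n) (simp_all add: Suc_choose_two)

lemma prod_lessThan_add:
  fixes f :: "nat \<Rightarrow> 'a::comm_monoid_mult"
  shows "(\<Prod>i<m + n. f i) = (\<Prod>i<m. f i) * (\<Prod>i<n. f (m + i))"
  by (induction n) (auto simp: mult_ac)

lemma sum_atMost_double_split:
  fixes f :: "nat \<Rightarrow> 'a::comm_monoid_add"
  shows "(\<Sum>k\<le>n + n. f k) = (\<Sum>i\<le>n. f (n + i)) + (\<Sum>i<n. f (n - Suc i))"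
proof -
  have "{..n + n} = {..<n} \<union> {n..n + n}" by auto
  then have "(\<Sum>k\<le>n + n. f k) = (\<Sum>k<n. f k) + (\<Sum>k\<in>{n..n + n}. f k)"
    by (simp add: sum.union_disjoint[symmetric] ivl_disj_int)
  also have "(\<Sum>k\<in>{n..n + n}. f k) = (\<Sum>i\<le>n. f (n + i))"
    using sum.shift_bounds_cl_nat_ivl[of f 0 n n] by (simp add: atLeast0AtMost add.commute)
  also have "(\<Sum>k<n. f k) = (\<Sum>i<n. f (n - Suc i))"
    by (rule sum.nat_diff_reindex[symmetric])
  finally show ?thesis by (simp add: add.commute)
qed

fun qbinomial :: "'a::comm_ring_1 \<Rightarrow> nat \<Rightarrow> nat \<Rightarrow> 'a" where
  "qbinomial q n 0 = 1"
| "qbinomial q 0 (Suc k) = 0"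
| "qbinomial q (Suc n) (Suc k) = qbinomial q n k + q ^ Suc k * qbinomial q n (Suc k)"

lemma qbinomial_eq_0: "n < k \<Longrightarrow> qbinomial q n k = 0"
proof (induction n arbitrary: k)
  case 0 then show ?case by (cases k) auto
next
  case (Suc n) then show ?case by (cases k) auto
qed

lemma qbinomial_theorem:
  fixes q y z :: "'a::comm_ring_1"
  shows "(\<Prod>i<n. y + z * q ^ i) = (\<Sum>k\<le>n. qbinomial q n k * q ^ (k choose 2) * z ^ k * y ^ (n - k))"
proof (induction n arbitrary: z)
  case 0 then show ?case by (simp add: binomial_eq_0)
next
  case (Suc n)
  have "(\<Prod>i<Suc n. y + z * q ^ i) = (y + z) * (\<Prod>i<n. y + (z * q) * q ^ i)"
    by (subst prod.lessThan_Suc_shift) (simp add: mult.assoc del: prod.lessThan_Suc)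
  also have "\<dots> = (y + z) * (\<Sum>k\<le>n. qbinomial q n k * q ^ (k choose 2) * (z * q) ^ k * y ^ (n - k))"
    by (simp add: Suc)
  also have "\<dots> = (\<Sum>k\<le>n. qbinomial q n k * q ^ (k choose 2) * (z * q) ^ k * y ^ (Suc n - k))
       + (\<Sum>k\<le>n. qbinomial q n k * q ^ (Suc k choose 2) * z ^ Suc k * y ^ (n - k))"
    by (simp add: distrib_right sum_distrib_left Suc_diff_le Suc_choose_two power_add
        power_mult_distrib sum.distrib mult_ac)
  also have "(\<Sum>k\<le>n. qbinomial q n k * q ^ (k choose 2) * (z * q) ^ k * y ^ (Suc n - k))
      = y ^ Suc n + (\<Sum>k\<le>n. q ^ Suc k * qbinomial q n (Suc k) * q ^ (Suc k choose 2) * z ^ Suc k * y ^ (n - k))"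
  proof -
    have "(\<Sum>k\<le>n. qbinomial q n k * q ^ (k choose 2) * (z * q) ^ k * y ^ (Suc n - k))
       = (\<Sum>k\<le>Suc n. qbinomial q n k * q ^ (k choose 2) * (z * q) ^ k * y ^ (Suc n - k))"
      by (simp add: qbinomial_eq_0)
    also have "\<dots> = y ^ Suc n + (\<Sum>k\<le>n. qbinomial q n (Suc k) * q ^ (Suc k choose 2) * (z * q) ^ Suc k * y ^ (n - k))"
      by (subst sum.atMost_Suc_shift) (simp add: binomial_eq_0)
    finally show ?thesis by (simp add: power_mult_distrib mult_ac)
  qed
  finally have "(\<Prod>i<Suc n. y + z * q ^ i) = y ^ Suc n
      + (\<Sum>k\<le>n. (qbinomial q n k + q ^ Suc k * qbinomial q n (Suc k)) * q ^ (Suc k choose 2) * z ^ Suc k * y ^ (n - k))"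
    by (simp add: sum.distrib distrib_right algebra_simps)
  also have "\<dots> = (\<Sum>k\<le>Suc n. qbinomial q (Suc n) k * q ^ (k choose 2) * z ^ k * y ^ (Suc n - k))"
    by (subst sum.atMost_Suc_shift) (simp add: binomial_eq_0)
  finally show ?case .
qed

definition qpochhammer :: "'a::comm_ring_1 \<Rightarrow> 'a \<Rightarrow> nat \<Rightarrow> 'a" where
  "qpochhammer a q n = (\<Prod>j<n. 1 - a * q ^ j)"

lemma qpochhammer_0 [simp]: "qpochhammer a q 0 = 1"
  by (simp add: qpochhammer_def)

lemma qpochhammer_Suc: "qpochhammer a q (Suc n) = qpochhammer a q n * (1 - a * q ^ n)"
  by (simp add: qpochhammer_def)

lemma qpochhammer_add: "qpochhammer a q (m + n) = qpochhammer a q m * qpochhammer (a * q ^ m) q n"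
  by (simp add: qpochhammer_def prod_lessThan_add power_add mult.assoc)

lemma qbinomial_qpochhammer:
  "k \<le> n \<Longrightarrow> qbinomial q n k * qpochhammer q q k * qpochhammer q q (n - k) = qpochhammer q q n"
proof (induction n arbitrary: k)
  case 0 then show ?case by simp
next
  case (Suc n)
  show ?case
  proof (cases k)
    case 0 then show ?thesis by simp
  next
    case (Suc k')
    have first_summand: "qbinomial q n k' * qpochhammer q q (Suc k') * qpochhammer q q (n - k') = qpochhammer q q n * (1 - q ^ Suc k')"
    proof -
      have "qbinomial q n k' * qpochhammer q q (Suc k') * qpochhammer q q (n - k')
          = (qbinomial q n k' * qpochhammer q q k' * qpochhammer q q (n - k')) * (1 - q ^ Suc k')"
        by (simp add: qpochhammer_Suc mult_ac)
      then show ?thesis using Suc.IH[of k'] Suc.prems Suc by simp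
    qed
    have second_summand: "q ^ Suc k' * qbinomial q n (Suc k') * qpochhammer q q (Suc k') * qpochhammer q q (n - k')
        = q ^ Suc k' * qpochhammer q q n * (1 - q ^ (n - k'))"
    proof (cases "Suc k' \<le> n")
      case True
      then have e: "n - k' = Suc (n - Suc k')" by simp
      have "q ^ Suc k' * qbinomial q n (Suc k') * qpochhammer q q (Suc k') * qpochhammer q q (n - k')
          = q ^ Suc k' * (qbinomial q n (Suc k') * qpochhammer q q (Suc k') * qpochhammer q q (n - Suc k'))
            * (1 - q ^ (n - k'))"
        by (simp only: e qpochhammer_Suc) (simp add: mult_ac)
      then show ?thesis using Suc.IH[OF True] by simp
    next
      case False
      then have "n = k'" using Suc Suc.prems by simp
      then show ?thesis by (simp add: qbinomial_eq_0)
    qed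
    have "qbinomial q (Suc n) k * qpochhammer q q k * qpochhammer q q (Suc n - k)
        = qbinomial q n k' * qpochhammer q q (Suc k') * qpochhammer q q (n - k')
          + q ^ Suc k' * qbinomial q n (Suc k') * qpochhammer q q (Suc k') * qpochhammer q q (n - k')"
      using Suc by (simp add: algebra_simps)
    also have "\<dots> = qpochhammer q q n * (1 - q ^ Suc k' * q ^ (n - k'))"
      unfolding first_summand second_summand by (simp add: algebra_simps)
    also have "q ^ Suc k' * q ^ (n - k') = q ^ (Suc k' + (n - k'))"
      by (rule power_add[symmetric])
    also have "Suc k' + (n - k') = Suc n"
      using Suc Suc.prems by simp
    finally show ?thesis by (simp add: qpochhammer_Suc)
  qed
qed

lemma qbinomial_eq_qpochhammer_div:
  fixes q :: "'a::field"
  assumes "k \<le> n" "qpochhammer q q k \<noteq> 0" "qpochhammer q q (n - k) \<noteq> 0"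
  shows "qbinomial q n k = qpochhammer q q n / (qpochhammer q q k * qpochhammer q q (n - k))"
  using qbinomial_qpochhammer[OF assms(1), of q] assms(2,3) by (simp add: field_simps)

lemma qpochhammer_of_real: "qpochhammer (of_real a) (of_real q) n = of_real (qpochhammer a q n)"
  by (simp add: qpochhammer_def)

section \<open>The finite triple product\<close>

lemma prod_lessThan_qpow_reflect:
  fixes q x :: "'a::comm_ring_1"
  shows "(\<Prod>i<n. q ^ (n - 1) + x * q ^ i) = q ^ (n choose 2) * (\<Prod>i<n. x + q ^ i)"
proof -
  have "(\<Prod>i<n. q ^ (n - 1) + x * q ^ i) = (\<Prod>i<n. q ^ i * (x + q ^ (n - Suc i)))"
  proof (rule prod.cong[OF refl])
    fix i assume "i \<in> {..<n}"
    then have "n - 1 = i + (n - Suc i)" by auto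
    then show "q ^ (n - 1) + x * q ^ i = q ^ i * (x + q ^ (n - Suc i))"
      by (simp add: power_add algebra_simps)
  qed
  also have "\<dots> = q ^ (\<Sum>i<n. i) * (\<Prod>i<n. x + q ^ (n - Suc i))"
    by (simp add: prod.distrib power_sum)
  also have "(\<Prod>i<n. x + q ^ (n - Suc i)) = (\<Prod>i<n. x + q ^ i)"
    by (rule prod.nat_diff_reindex)
  finally show ?thesis by (simp add: sum_lessThan_id_eq_choose_two)
qed

lemma prod_lessThan_qpow_shift:
  fixes q x :: "'a::comm_ring_1"
  shows "(\<Prod>i<n. q ^ (n - 1) + x * q ^ (n + i)) = q ^ (n * (n - 1)) * (\<Prod>m<n. 1 + x * q ^ Suc m)"
proof -
  have "(\<Prod>i<n. q ^ (n - 1) + x * q ^ (n + i)) = (\<Prod>i<n. q ^ (n - 1) * (1 + x * q ^ Suc i))"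
  proof (rule prod.cong[OF refl])
    fix i assume "i \<in> {..<n}"
    then have "n + i = (n - 1) + Suc i" by auto
    then have "q ^ (n + i) = q ^ (n - 1) * q ^ Suc i"
      by (metis power_add)
    then show "q ^ (n - 1) + x * q ^ (n + i) = q ^ (n - 1) * (1 + x * q ^ Suc i)"
      by (simp add: algebra_simps)
  qed
  also have "\<dots> = q ^ (n * (n - 1)) * (\<Prod>m<n. 1 + x * q ^ Suc m)"
    by (simp add: prod.distrib power_mult[symmetric] mult.commute)
  finally show ?thesis .
qed

text \<open>Cauchy's theorem with \<open>y = q ^ (n - 1)\<close>: after scaling by \<open>x ^ n\<close> and a power of \<open>q\<close>,
  the two finite products of the triple product become one product \<open>\<Prod>i<2n. y + x q ^ i\<close>.\<close>
lemma jtp_prod_scaled_expansion: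
  fixes q x :: "'a::field"
  assumes "x \<noteq> 0"
  shows "x ^ n * q ^ ((n choose 2) + n * (n - 1)) * ((\<Prod>m<n. 1 + x * q ^ Suc m) * (\<Prod>i<n. 1 + q ^ i / x))
       = (\<Sum>k\<le>n + n. qbinomial q (n + n) k * q ^ ((k choose 2) + (n - 1) * (n + n - k)) * x ^ k)"
proof -
  have "x ^ n * (\<Prod>i<n. 1 + q ^ i / x) = (\<Prod>i<n. x * (1 + q ^ i / x))"
    by (simp add: prod.distrib)
  also have "\<dots> = (\<Prod>i<n. x + q ^ i)"
    using assms by (simp add: distrib_left)
  finally have "(\<Prod>i<n + n. q ^ (n - 1) + x * q ^ i)
      = x ^ n * q ^ ((n choose 2) + n * (n - 1)) * ((\<Prod>m<n. 1 + x * q ^ Suc m) * (\<Prod>i<n. 1 + q ^ i / x))"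
    unfolding prod_lessThan_add prod_lessThan_qpow_reflect prod_lessThan_qpow_shift
    by (simp add: power_add mult_ac)
  moreover have "(\<Prod>i<n + n. q ^ (n - 1) + x * q ^ i)
      = (\<Sum>k\<le>n + n. qbinomial q (n + n) k * q ^ (k choose 2) * x ^ k * (q ^ (n - 1)) ^ (n + n - k))"
    by (rule qbinomial_theorem)
  ultimately show ?thesis by (simp add: power_mult power_add mult_ac)
qed

lemma choose_two_exponent_upper:
  assumes "i \<le> n"
  shows "((n + i) choose 2) + (n - 1) * (n + n - (n + i)) = (n choose 2) + n * (n - 1) + (Suc i choose 2)"
proof -
  obtain d where d: "n = i + d" using assms le_Suc_ex by blast
  have "2 * (((n + i) choose 2) + (n - 1) * (n + n - (n + i))) = 2 * ((n choose 2) + n * (n - 1) + (Suc i choose 2))"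
    unfolding distrib_left two_mult_choose_two using d
    by (cases i; cases d) (simp_all add: algebra_simps)
  then show ?thesis by simp
qed

lemma choose_two_exponent_lower:
  assumes "i < n"
  shows "((n - Suc i) choose 2) + (n - 1) * (n + n - (n - Suc i)) = (n choose 2) + n * (n - 1) + (Suc i choose 2)"
proof -
  obtain d where d: "n = Suc (i + d)" using assms less_imp_Suc_add by blast
  have "2 * (((n - Suc i) choose 2) + (n - 1) * (n + n - (n - Suc i))) = 2 * ((n choose 2) + n * (n - 1) + (Suc i choose 2))"
    unfolding distrib_left two_mult_choose_two using d
    by (cases i; cases d) (simp_all add: algebra_simps)
  then show ?thesis by simp
qed

lemma finite_jacobi_triple_product:
  fixes q x :: "'a::field"
  assumes "q \<noteq> 0" and "x \<noteq> 0"
  shows "(\<Prod>m<n. 1 + x * q ^ Suc m) * (\<Prod>i<n. 1 + q ^ i / x)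
       = (\<Sum>i\<le>n. qbinomial q (n + n) (n + i) * q ^ (Suc i choose 2) * x ^ i)
         + (\<Sum>i<n. qbinomial q (n + n) (n - Suc i) * q ^ (Suc i choose 2) / x ^ Suc i)"
    (is "?P = ?Pos + ?Neg")
proof -
  define s where "s = x ^ n * q ^ ((n choose 2) + n * (n - 1))"
  define f where "f k = qbinomial q (n + n) k * q ^ ((k choose 2) + (n - 1) * (n + n - k)) * x ^ k" for k
  have "s * ?P = (\<Sum>i\<le>n. f (n + i)) + (\<Sum>i<n. f (n - Suc i))"
    unfolding s_def f_def jtp_prod_scaled_expansion[OF assms(2)] by (rule sum_atMost_double_split)
  also have "(\<Sum>i\<le>n. f (n + i)) = s * ?Pos"
    unfolding sum_distrib_left
  proof (rule sum.cong[OF refl])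
    fix i assume "i \<in> {..n}"
    then have "q ^ (((n + i) choose 2) + (n - 1) * (n + n - (n + i)))
        = q ^ ((n choose 2) + n * (n - 1)) * q ^ (Suc i choose 2)"
      by (simp only: choose_two_exponent_upper power_add atMost_iff)
    then show "f (n + i) = s * (qbinomial q (n + n) (n + i) * q ^ (Suc i choose 2) * x ^ i)"
      unfolding f_def s_def by (simp add: power_add mult_ac)
  qed
  also have "(\<Sum>i<n. f (n - Suc i)) = s * ?Neg"
    unfolding sum_distrib_left
  proof (rule sum.cong[OF refl])
    fix i assume i: "i \<in> {..<n}"
    then have "q ^ (((n - Suc i) choose 2) + (n - 1) * (n + n - (n - Suc i)))
        = q ^ ((n choose 2) + n * (n - 1)) * q ^ (Suc i choose 2)"
      by (simp only: choose_two_exponent_lower power_add lessThan_iff)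
    moreover have "x ^ (n - Suc i) = x ^ n / x ^ Suc i"
      using i assms(2) by (simp add: power_diff)
    ultimately show "f (n - Suc i) = s * (qbinomial q (n + n) (n - Suc i) * q ^ (Suc i choose 2) / x ^ Suc i)"
      unfolding f_def s_def by (simp add: mult_ac)
  qed
  finally have "s * ?P = s * (?Pos + ?Neg)"
    by (simp add: distrib_left)
  moreover have "s \<noteq> 0"
    using assms by (simp add: s_def)
  ultimately show ?thesis by simp
qed

section \<open>The theta series\<close>

definition theta_term :: "real \<Rightarrow> complex \<Rightarrow> int \<Rightarrow> complex" where
  "theta_term q x j = tcoef q j * x powi j"

lemma tcoef_nonneg_index: "tcoef q (int i) = of_real (q ^ (Suc i choose 2))"
proof -
  have "int i * (int i + 1) div 2 = int (Suc i * i div 2)"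
    by (simp add: zdiv_int algebra_simps)
  then show ?thesis
    unfolding tcoef_def choose_two by simp
qed

lemma tcoef_neg_index: "tcoef q (- int i - 1) = of_real (q ^ (Suc i choose 2))"
proof -
  have "(- int i - 1) * (- int i - 1 + 1) div 2 = int (Suc i * i div 2)"
    by (simp add: zdiv_int algebra_simps)
  then show ?thesis
    unfolding tcoef_def choose_two by simp
qed

lemma theta_term_nonneg_index: "theta_term q x (int i) = of_real (q ^ (Suc i choose 2)) * x ^ i"
  by (simp add: theta_term_def tcoef_nonneg_index)

lemma theta_term_neg_index: "theta_term q x (- int i - 1) = of_real (q ^ (Suc i choose 2)) / x ^ Suc i"
proof -
  have "x powi (- int i - 1) = x powi (- int (Suc i))"
    by (rule arg_cong[where f = "power_int x"]) simp
  also have "\<dots> = inverse (x ^ Suc i)"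
    by (simp only: power_int_minus power_int_of_nat)
  finally have "x powi (- int i - 1) = inverse (x ^ Suc i)" .
  then show ?thesis
    by (simp add: theta_term_def tcoef_neg_index divide_inverse)
qed

lemma summable_theta_majorant:
  fixes q c :: real
  assumes "0 < q" "q < 1" "0 \<le> c"
  shows "summable (\<lambda>k. q ^ (Suc k choose 2) * c ^ k)"
proof -
  obtain N where N: "q ^ N < 1 / (2 * c + 1)"
    using real_arch_pow_inv[of "1 / (2 * c + 1)" q] assms by auto
  show ?thesis
  proof (rule summable_ratio_test[where c = "1/2" and N = N])
    fix n assume "N \<le> n"
    then have "q ^ Suc n \<le> q ^ N"
      using assms by (intro power_decreasing) auto
    then have "c * q ^ Suc n \<le> c * (1 / (2 * c + 1))"
      using N assms(3) by (intro mult_left_mono) auto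
    also have "\<dots> \<le> 1/2"
      using assms(3) by (simp add: field_simps)
    finally have ratio: "c * q ^ Suc n \<le> 1/2" .
    have "q ^ (Suc (Suc n) choose 2) * c ^ Suc n = (c * q ^ Suc n) * (q ^ (Suc n choose 2) * c ^ n)"
      by (simp only: Suc_choose_two[of "Suc n"] power_add) (simp add: mult_ac)
    also have "\<dots> \<le> 1/2 * (q ^ (Suc n choose 2) * c ^ n)"
      using ratio assms by (intro mult_right_mono) auto
    finally show "norm (q ^ (Suc (Suc n) choose 2) * c ^ Suc n) \<le> 1/2 * norm (q ^ (Suc n choose 2) * c ^ n)"
      using assms by simp
  qed simp
qed

lemma summable_norm_theta_term_nonneg_index:
  assumes "0 < q" "q < 1"
  shows "summable (\<lambda>k. norm (theta_term q x (int k)))"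
  using summable_theta_majorant[OF assms norm_ge_zero, of x] assms
  by (simp add: theta_term_nonneg_index norm_mult norm_power)

lemma summable_norm_theta_term_neg_index:
  assumes "0 < q" "q < 1" "x \<noteq> 0"
  shows "summable (\<lambda>k. norm (theta_term q x (- int k - 1)))"
proof -
  have "summable (\<lambda>k. 1 / cmod x * (q ^ (Suc k choose 2) * (1 / cmod x) ^ k))"
    using summable_theta_majorant[of q "1 / cmod x"] assms by (intro summable_mult) auto
  then show ?thesis
    using assms by (simp add: theta_term_neg_index norm_divide norm_mult norm_power power_one_over field_simps)
qed

lemma has_sum_range_suminf:
  fixes f :: "'b \<Rightarrow> 'a::banach"
  assumes "inj h" "summable (\<lambda>k. norm (f (h k)))"
  shows "(f has_sum (\<Sum>k. f (h k))) (range h)"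
proof -
  have "((f \<circ> h) has_sum (\<Sum>k. f (h k))) UNIV"
    using norm_summable_imp_has_sum[OF assms(2) summable_sums[OF summable_norm_cancel[OF assms(2)]]]
    by (simp add: o_def)
  then show ?thesis
    using has_sum_reindex[OF assms(1)] by blast
qed

lemma ptheta_eq_suminf: "ptheta q x = (\<Sum>k. theta_term q x (int k))"
  by (simp add: ptheta_def theta_term_def)

lemma range_int_eq: "range int = {0..}"
proof (intro set_eqI iffI)
  fix j :: int assume "j \<in> {0..}"
  then have "j = int (nat j)" by simp
  then show "j \<in> range int" by (rule image_eqI) simp
qed auto

lemma range_neg_index: "range (\<lambda>k::nat. - int k - 1) = {..-1}"
proof (intro set_eqI iffI)
  fix j :: int assume "j \<in> {..-1}"
  then have "j = - int (nat (- j - 1)) - 1" by simp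
  then show "j \<in> range (\<lambda>k::nat. - int k - 1)" by (rule image_eqI) simp
qed auto

lemma
  assumes "0 < q" "q < 1" "x \<noteq> 0"
  shows Gfun_eq_suminf: "Gfun q x = (\<Sum>k. theta_term q x (- int k - 1))"
    and Theta_star_eq_ptheta_plus_Gfun: "Theta_star q x = ptheta q x + Gfun q x"
proof -
  have "(theta_term q x has_sum ptheta q x) (range int)"
    unfolding ptheta_eq_suminf
    by (rule has_sum_range_suminf) (simp_all add: summable_norm_theta_term_nonneg_index assms)
  then have nonneg: "(theta_term q x has_sum ptheta q x) {0..}"
    by (simp add: range_int_eq)
  have neg: "(theta_term q x has_sum (\<Sum>k. theta_term q x (- int k - 1))) {..-1}"
    unfolding range_neg_index[symmetric]
    by (rule has_sum_range_suminf) (auto simp: inj_def summable_norm_theta_term_neg_index assms)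
  then show G: "Gfun q x = (\<Sum>k. theta_term q x (- int k - 1))"
    unfolding Gfun_def theta_term_def[abs_def] by (rule infsumI)
  have "(theta_term q x has_sum (ptheta q x + Gfun q x)) ({0..} \<union> {..-1})"
    unfolding G by (rule has_sum_Un_disjoint[OF nonneg neg]) auto
  moreover have "{0::int..} \<union> {..-1} = UNIV"
    by auto
  ultimately show "Theta_star q x = ptheta q x + Gfun q x"
    unfolding Theta_star_def theta_term_def[abs_def] by (auto intro: infsumI)
qed

section \<open>The Jacobi triple product as a limit\<close>

lemma tendsto_weighted_suminf:
  fixes f :: "nat \<Rightarrow> 'a::{real_normed_div_algebra, banach}"
  assumes "summable (\<lambda>k. norm (f k))"
    and "\<And>n k. norm (w n k) \<le> 1" and "\<And>k. (\<lambda>n. w n k) \<longlonglongrightarrow> 1"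
  shows "(\<lambda>n. \<Sum>k. w n k * f k) \<longlonglongrightarrow> (\<Sum>k. f k)"
proof (rule tannerys_theorem[THEN conjunct2, THEN conjunct2])
  show "(\<lambda>n. w n k * f k) \<longlonglongrightarrow> f k" for k
    using tendsto_mult[OF assms(3) tendsto_const, of k "f k"] by simp
  show "\<forall>\<^sub>F (k, n) in sequentially \<times>\<^sub>F sequentially. norm (w n k * f k) \<le> norm (f k)"
    using assms(2) by (intro always_eventually) (auto simp: norm_mult intro: mult_left_le_one_le)
qed (use assms(1) in auto)

lemma mult_power_less_1:
  fixes q :: real
  assumes "0 \<le> q" "q < 1"
  shows "q * q ^ m < 1"
proof -
  have "q * q ^ m \<le> q * 1"
    using assms by (intro mult_left_mono power_le_one) auto
  then show ?thesis
    using assms by simp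
qed

lemma qpochhammer_pos:
  fixes a q :: real
  assumes "0 \<le> a" "a < 1" "0 \<le> q" "q \<le> 1"
  shows "0 < qpochhammer a q n"
  unfolding qpochhammer_def
proof (rule prod_pos)
  fix j assume "j \<in> {..<n}"
  have "a * q ^ j \<le> a * 1"
    using assms by (intro mult_left_mono power_le_one) auto
  then show "0 < 1 - a * q ^ j"
    using assms by simp
qed

lemma qpochhammer_antimono:
  fixes a b q :: real
  assumes "0 \<le> b" "b \<le> a" "a \<le> 1" "0 \<le> q" "q \<le> 1"
  shows "qpochhammer a q n \<le> qpochhammer b q n"
  unfolding qpochhammer_def
proof (rule prod_mono)
  fix j assume "j \<in> {..<n}"
  have "q ^ j \<le> 1" "0 \<le> q ^ j"
    using assms by (auto intro: power_le_one)
  then have "a * q ^ j \<le> 1" "b * q ^ j \<le> a * q ^ j"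
    using assms by (auto intro: mult_le_one mult_right_mono)
  then show "0 \<le> 1 - a * q ^ j \<and> 1 - a * q ^ j \<le> 1 - b * q ^ j"
    by simp
qed

lemma qpochhammer_le_1:
  fixes a q :: real
  assumes "0 \<le> a" "a \<le> 1" "0 \<le> q" "q \<le> 1"
  shows "qpochhammer a q n \<le> 1"
  using qpochhammer_antimono[of 0 a q n] assms by (simp add: qpochhammer_def)

lemma qpochhammer_ge_Bernoulli:
  fixes a q :: real
  assumes "0 \<le> a" "a \<le> 1" "0 \<le> q" "q \<le> 1"
  shows "1 - real n * a \<le> qpochhammer a q n"
proof -
  have "1 + real n * (- a) \<le> (1 + (- a)) ^ n"
    by (rule Bernoulli_inequality) (use assms in simp)
  also have "\<dots> = qpochhammer a 1 n"
    by (simp add: qpochhammer_def)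
  also have "\<dots> \<le> qpochhammer a q n"
    unfolding qpochhammer_def
  proof (rule prod_mono)
    fix j assume "j \<in> {..<n}"
    have "a * q ^ j \<le> a"
      using assms by (intro mult_left_le power_le_one) auto
    then show "0 \<le> 1 - a * 1 ^ j \<and> 1 - a * 1 ^ j \<le> 1 - a * q ^ j"
      using assms by simp
  qed
  finally show ?thesis by simp
qed

lemma tendsto_qpochhammer_1:
  fixes a :: "'b \<Rightarrow> 'a::real_normed_field"
  assumes "(a \<longlongrightarrow> 0) F"
  shows "((\<lambda>m. qpochhammer (a m) q n) \<longlongrightarrow> 1) F"
proof -
  have "((\<lambda>m. \<Prod>j<n. 1 - a m * q ^ j) \<longlongrightarrow> (\<Prod>j<n. 1 - 0 * q ^ j)) F"
    by (intro tendsto_intros assms)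
  then show ?thesis
    by (simp add: qpochhammer_def)
qed

lemma tendsto_qpochhammer_diagonal:
  fixes q :: real
  assumes "0 < q" "q < 1"
  shows "(\<lambda>n. qpochhammer (q * q ^ n) q n) \<longlonglongrightarrow> 1"
proof (rule real_tendsto_sandwich)
  have "(\<lambda>n. real n * q ^ n) \<longlonglongrightarrow> 0"
    using powser_times_n_limit_0[of q] assms by simp
  then have "(\<lambda>n. 1 - q * (real n * q ^ n)) \<longlonglongrightarrow> 1 - q * 0"
    by (intro tendsto_intros)
  then show "(\<lambda>n. 1 - real n * (q * q ^ n)) \<longlonglongrightarrow> 1"
    by (simp add: mult.left_commute)
  have "0 \<le> q * q ^ n" "q * q ^ n \<le> 1" for n
    using assms mult_power_less_1[of q n] by auto
  then show "\<forall>\<^sub>F n in sequentially. 1 - real n * (q * q ^ n) \<le> qpochhammer (q * q ^ n) q n"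
    and "\<forall>\<^sub>F n in sequentially. qpochhammer (q * q ^ n) q n \<le> 1"
    using assms by (auto intro!: always_eventually qpochhammer_ge_Bernoulli qpochhammer_le_1)
qed simp

text \<open>\<open>jtp_weight q n i\<close> is the Gaussian binomial coefficient \<open>[2n, n + i]\<^sub>q\<close> times
  \<open>(q; q)\<^sub>n\<^sup>2 / (q; q)\<^sub>2\<^sub>n\<close>: the coefficients of the finite triple product, normalised so that
  they tend to 1.\<close>
definition jtp_weight :: "real \<Rightarrow> nat \<Rightarrow> nat \<Rightarrow> real" where
  "jtp_weight q n i = qpochhammer q q n ^ 2 / (qpochhammer q q (n + i) * qpochhammer q q (n - i))"

lemma jtp_weight_eq:
  assumes "0 < q" "q < 1" "i \<le> n"
  shows "jtp_weight q n i = qpochhammer (q * q ^ (n - i)) q i / qpochhammer (q * q ^ n) q i"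
proof -
  have qp_pos: "0 < qpochhammer q q m" "0 < qpochhammer (q * q ^ m) q i" for m
    using assms mult_power_less_1[of q m] by (auto intro!: qpochhammer_pos)
  have "qpochhammer q q n = qpochhammer q q (n - i) * qpochhammer (q * q ^ (n - i)) q i"
    using qpochhammer_add[of q q "n - i" i] assms by simp
  moreover have "qpochhammer q q (n + i) = qpochhammer q q n * qpochhammer (q * q ^ n) q i"
    by (rule qpochhammer_add)
  ultimately show ?thesis
    unfolding jtp_weight_def using qp_pos[of n] qp_pos[of "n - i"]
    by (simp add: power2_eq_square field_simps)
qed

lemma
  assumes "0 < q" "q < 1" "i \<le> n"
  shows jtp_weight_nonneg: "0 \<le> jtp_weight q n i"
    and jtp_weight_le_1: "jtp_weight q n i \<le> 1"
proof -
  have "q * q ^ n \<le> q * q ^ (n - i)" "q * q ^ (n - i) < 1"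
    using assms mult_power_less_1[of q "n - i"] by (auto intro!: mult_left_mono power_decreasing)
  then have "0 < qpochhammer (q * q ^ (n - i)) q i"
    "qpochhammer (q * q ^ (n - i)) q i \<le> qpochhammer (q * q ^ n) q i"
    using assms by (auto intro!: qpochhammer_pos qpochhammer_antimono)
  then show "0 \<le> jtp_weight q n i" "jtp_weight q n i \<le> 1"
    unfolding jtp_weight_eq[OF assms] by auto
qed

lemma jtp_weight_tendsto_1:
  assumes "0 < q" "q < 1"
  shows "(\<lambda>n. jtp_weight q n i) \<longlonglongrightarrow> 1"
proof -
  have "(\<lambda>m. q * q ^ m) \<longlonglongrightarrow> 0"
    using LIMSEQ_power_zero[of q] assms tendsto_mult_right_zero by auto
  then have shift: "(\<lambda>m. qpochhammer (q * q ^ m) q i) \<longlonglongrightarrow> 1"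
    by (rule tendsto_qpochhammer_1)
  have "(\<lambda>n. qpochhammer (q * q ^ (n - i)) q i / qpochhammer (q * q ^ n) q i) \<longlonglongrightarrow> 1 / 1"
    using filterlim_compose[OF shift filterlim_minus_const_nat_at_top[of i]] shift
    by (intro tendsto_divide) (auto simp: o_def)
  then have "(\<lambda>n. qpochhammer (q * q ^ (n - i)) q i / qpochhammer (q * q ^ n) q i) \<longlonglongrightarrow> 1"
    by simp
  then show ?thesis
    by (rule Lim_transform_eventually)
       (use eventually_ge_at_top[of i] in \<open>eventually_elim, simp add: jtp_weight_eq[OF assms]\<close>)
qed

definition theta_approx :: "real \<Rightarrow> complex \<Rightarrow> nat \<Rightarrow> complex" where
  "theta_approx q x n =
     (\<Sum>i\<le>n. of_real (jtp_weight q n i) * theta_term q x (int i))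
     + (\<Sum>i<n. of_real (jtp_weight q n (Suc i)) * theta_term q x (- int i - 1))"

lemma theta_approx_tendsto:
  assumes q: "0 < q" "q < 1" and x: "x \<noteq> 0"
  shows "theta_approx q x \<longlonglongrightarrow> Theta_star q x"
proof -
  define v where "v n k = (if k \<le> n then of_real (jtp_weight q n k) else 0 :: complex)" for n k
  define w where "w n k = (if k < n then of_real (jtp_weight q n (Suc k)) else 0 :: complex)" for n k
  have weights: "norm (v n k) \<le> 1" "norm (w n k) \<le> 1" for n k
    using jtp_weight_nonneg[OF q] jtp_weight_le_1[OF q] by (auto simp: v_def w_def)
  have lim: "(\<lambda>n. complex_of_real (jtp_weight q n k)) \<longlonglongrightarrow> 1" for k
    using tendsto_of_real[OF jtp_weight_tendsto_1[OF q, of k], where 'a = complex] by simp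
  have "(\<lambda>n. v n k) \<longlonglongrightarrow> 1" for k
    by (rule Lim_transform_eventually[OF lim])
       (use eventually_ge_at_top[of k] in \<open>eventually_elim, simp add: v_def\<close>)
  moreover have "(\<lambda>n. w n k) \<longlonglongrightarrow> 1" for k
    by (rule Lim_transform_eventually[OF lim])
       (use eventually_gt_at_top[of k] in \<open>eventually_elim, simp add: w_def\<close>)
  ultimately have "(\<lambda>n. (\<Sum>k. v n k * theta_term q x (int k)) + (\<Sum>k. w n k * theta_term q x (- int k - 1)))
      \<longlonglongrightarrow> ptheta q x + Gfun q x"
    unfolding ptheta_eq_suminf Gfun_eq_suminf[OF q x] using weights
    by (intro tendsto_add tendsto_weighted_suminf summable_norm_theta_term_nonneg_index
        summable_norm_theta_term_neg_index q x)
  moreover have "(\<Sum>k. v n k * theta_term q x (int k)) + (\<Sum>k. w n k * theta_term q x (- int k - 1))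
      = theta_approx q x n" for n
    by (subst suminf_finite[where N = "{..n}"], simp_all add: v_def,
        subst suminf_finite[where N = "{..<n}"], simp_all add: w_def theta_approx_def)
  ultimately show ?thesis
    by (simp add: Theta_star_eq_ptheta_plus_Gfun[OF q x])
qed

lemma
  assumes "0 < q" "q < 1" "i \<le> n"
  shows of_real_jtp_weight_upper: "of_real (jtp_weight q n i)
      = of_real (qpochhammer q q n ^ 2 / qpochhammer q q (n + n)) * qbinomial (of_real q :: complex) (n + n) (n + i)"
    and of_real_jtp_weight_lower: "of_real (jtp_weight q n i)
      = of_real (qpochhammer q q n ^ 2 / qpochhammer q q (n + n)) * qbinomial (of_real q :: complex) (n + n) (n - i)"
proof -
  have qp_pos: "0 < qpochhammer q q m" for m
    using assms by (intro qpochhammer_pos) auto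
  have qbinomial_real: "qbinomial (of_real q :: complex) (n + n) k
      = of_real (qpochhammer q q (n + n) / (qpochhammer q q k * qpochhammer q q (n + n - k)))"
    if "k \<le> n + n" for k
  proof -
    have "qpochhammer q q m \<noteq> 0" for m
      using qp_pos[of m] by simp
    then show ?thesis
      using qbinomial_eq_qpochhammer_div[OF that, of "of_real q :: complex"]
      by (simp only: qpochhammer_of_real of_real_eq_0_iff of_real_mult of_real_divide not_False_eq_True
          simp_thms)
  qed
  have "jtp_weight q n i = qpochhammer q q n ^ 2 / qpochhammer q q (n + n)
      * (qpochhammer q q (n + n) / (qpochhammer q q (n + i) * qpochhammer q q (n - i)))"
    using qp_pos[of "n + n"] by (simp add: jtp_weight_def)
  moreover have "n + n - (n + i) = n - i" "n + n - (n - i) = n + i"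
    using assms(3) by auto
  ultimately show "of_real (jtp_weight q n i)
      = of_real (qpochhammer q q n ^ 2 / qpochhammer q q (n + n)) * qbinomial (of_real q :: complex) (n + n) (n + i)"
    and "of_real (jtp_weight q n i)
      = of_real (qpochhammer q q n ^ 2 / qpochhammer q q (n + n)) * qbinomial (of_real q :: complex) (n + n) (n - i)"
    using qbinomial_real[of "n + i"] qbinomial_real[of "n - i"] by (simp_all add: mult.commute)
qed

lemma theta_approx_eq_prod:
  assumes q: "0 < q" "q < 1" and x: "x \<noteq> 0"
  shows "theta_approx q x n = of_real (qpochhammer q q n ^ 2 / qpochhammer q q (n + n))
    * ((\<Prod>m<n. 1 + x * of_real (q ^ Suc m)) * (\<Prod>i<n. 1 + of_real (q ^ i) / x))"
proof -
  define c :: complex where "c = of_real (qpochhammer q q n ^ 2 / qpochhammer q q (n + n))"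
  have upper: "c * (qbinomial (of_real q) (n + n) (n + i) * of_real q ^ (Suc i choose 2) * x ^ i)
      = of_real (jtp_weight q n i) * theta_term q x (int i)" if "i \<le> n" for i
    unfolding theta_term_nonneg_index of_real_jtp_weight_upper[OF q that] c_def of_real_power
    by (simp only: mult_ac)
  have lower: "c * (qbinomial (of_real q) (n + n) (n - Suc i) * of_real q ^ (Suc i choose 2) / x ^ Suc i)
      = of_real (jtp_weight q n (Suc i)) * theta_term q x (- int i - 1)" if "i < n" for i
    unfolding theta_term_neg_index of_real_jtp_weight_lower[OF q Suc_leI[OF that]] c_def of_real_power
    by (simp only: mult_ac times_divide_eq_right times_divide_eq_left)
  have "of_real q \<noteq> (0 :: complex)"
    using q by simp
  note jtp = finite_jacobi_triple_product[OF this x, of n]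
  have "c * ((\<Prod>m<n. 1 + x * of_real q ^ Suc m) * (\<Prod>i<n. 1 + of_real q ^ i / x))
      = (\<Sum>i\<le>n. c * (qbinomial (of_real q) (n + n) (n + i) * of_real q ^ (Suc i choose 2) * x ^ i))
        + (\<Sum>i<n. c * (qbinomial (of_real q) (n + n) (n - Suc i) * of_real q ^ (Suc i choose 2) / x ^ Suc i))"
    unfolding jtp distrib_left sum_distrib_left ..
  also have "\<dots> = theta_approx q x n"
    unfolding theta_approx_def
    by (intro arg_cong2[where f = "(+)"] sum.cong) (simp_all only: upper lower atMost_iff lessThan_iff)
  finally show ?thesis
    by (simp add: c_def)
qed

lemma jtp_partial_prod_eq:
  fixes q :: real and x :: complex
  shows "(1 + 1 / x) * (\<Prod>m\<in>{1..n}. of_real (1 - q ^ m) * (1 + x * of_real (q ^ m)) * (1 + of_real (q ^ m) / x))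
    = of_real (qpochhammer q q n) * ((\<Prod>m<n. 1 + x * of_real (q ^ Suc m)) * (\<Prod>i<n. 1 + of_real (q ^ i) / x))
      * (1 + of_real (q ^ n) / x)"
proof -
  have "(\<Prod>m<n. of_real (1 - q ^ Suc m)) = (of_real (qpochhammer q q n) :: complex)"
    by (simp add: qpochhammer_def)
  then have factors: "(\<Prod>m\<in>{1..n}. of_real (1 - q ^ m) * (1 + x * of_real (q ^ m)) * (1 + of_real (q ^ m) / x))
      = of_real (qpochhammer q q n) * (\<Prod>m<n. 1 + x * of_real (q ^ Suc m))
        * (\<Prod>m<n. 1 + of_real (q ^ Suc m) / x)"
    unfolding prod.atLeast1_atMost_eq[unfolded One_nat_def[symmetric]] prod.distrib by simp
  have shift: "(1 + 1 / x) * (\<Prod>m<n. 1 + of_real (q ^ Suc m) / x)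
      = (\<Prod>i<n. 1 + of_real (q ^ i) / x) * (1 + of_real (q ^ n) / x)"
    using prod.lessThan_Suc_shift[of "\<lambda>i. 1 + of_real (q ^ i) / x" n]
      prod.lessThan_Suc[of "\<lambda>i. 1 + of_real (q ^ i) / x" n]
    by simp
  have "(1 + 1 / x) * (\<Prod>m\<in>{1..n}. of_real (1 - q ^ m) * (1 + x * of_real (q ^ m)) * (1 + of_real (q ^ m) / x))
      = of_real (qpochhammer q q n) * (\<Prod>m<n. 1 + x * of_real (q ^ Suc m))
        * ((1 + 1 / x) * (\<Prod>m<n. 1 + of_real (q ^ Suc m) / x))"
    unfolding factors by (simp only: ac_simps)
  then show ?thesis
    unfolding shift by (simp only: mult.assoc)
qed

theorem jacobi_triple_product:
  assumes q: "0 < q" "q < 1" and x: "x \<noteq> 0"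
  shows "(\<lambda>n. (1 + 1 / x) * (\<Prod>m\<in>{1..n}.
            of_real (1 - q ^ m) * (1 + x * of_real (q ^ m)) * (1 + of_real (q ^ m) / x)))
         \<longlonglongrightarrow> Theta_star q x"
proof -
  define P where "P n = (\<Prod>m<n. 1 + x * of_real (q ^ Suc m)) * (\<Prod>i<n. 1 + of_real (q ^ i) / x)" for n
  have qp_pos: "0 < qpochhammer q q m" "0 < qpochhammer (q * q ^ m) q m" for m
    using q mult_power_less_1[of q m] by (auto intro!: qpochhammer_pos)
  have approx: "theta_approx q x n * of_real (qpochhammer (q * q ^ n) q n) = of_real (qpochhammer q q n) * P n"
    for n
  proof -
    have ta: "theta_approx q x n = of_real (qpochhammer q q n ^ 2 / qpochhammer q q (n + n)) * P n"
      unfolding P_def by (rule theta_approx_eq_prod[OF q x])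
    have "qpochhammer q q n ^ 2 / qpochhammer q q (n + n) * qpochhammer (q * q ^ n) q n = qpochhammer q q n"
      using qp_pos[of n] by (simp add: qpochhammer_add power2_eq_square)
    then show ?thesis
      unfolding ta by (simp only: of_real_mult[symmetric] mult_ac)
  qed
  have "(\<lambda>n. theta_approx q x n * of_real (qpochhammer (q * q ^ n) q n) * (1 + of_real (q ^ n) / x))
      \<longlonglongrightarrow> Theta_star q x * of_real 1 * (1 + of_real 0 / x)"
    using q x by (intro tendsto_mult tendsto_add tendsto_divide tendsto_const tendsto_of_real
        theta_approx_tendsto[OF q x] tendsto_qpochhammer_diagonal[OF q] LIMSEQ_power_zero) auto
  then have "(\<lambda>n. theta_approx q x n * of_real (qpochhammer (q * q ^ n) q n) * (1 + of_real (q ^ n) / x))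
      \<longlonglongrightarrow> Theta_star q x"
    by (simp only: of_real_1 of_real_0 div_0 add_0_right mult_1_right)
  then show ?thesis
    unfolding jtp_partial_prod_eq P_def[symmetric] approx[symmetric] .
qed

definition jtp_factor :: "real \<Rightarrow> complex \<Rightarrow> nat \<Rightarrow> real" where
  "jtp_factor q x m = (1 - q ^ m) * cmod (1 + x * of_real (q ^ m)) * cmod (1 + of_real (q ^ m) / x)"

lemma jtp_factor_nonneg: "0 \<le> q \<Longrightarrow> q \<le> 1 \<Longrightarrow> 0 \<le> jtp_factor q x m"
  by (simp add: jtp_factor_def power_le_one)

lemma norm_Theta_star_le_partial_prod:
  assumes q: "0 < q" "q < 1" and x: "x \<noteq> 0"
    and tail: "\<And>m. M < m \<Longrightarrow> jtp_factor q x m \<le> 1"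
  shows "cmod (Theta_star q x) \<le> cmod (1 + 1 / x) * (\<Prod>m\<in>{1..M}. jtp_factor q x m)"
proof (rule LIMSEQ_le_const2[OF tendsto_norm[OF jacobi_triple_product[OF q x]]])
  have nonneg: "0 \<le> jtp_factor q x m" for m
    using q by (simp add: jtp_factor_nonneg)
  show "\<exists>N. \<forall>n\<ge>N. cmod ((1 + 1 / x) * (\<Prod>m\<in>{1..n}.
      of_real (1 - q ^ m) * (1 + x * of_real (q ^ m)) * (1 + of_real (q ^ m) / x)))
      \<le> cmod (1 + 1 / x) * (\<Prod>m\<in>{1..M}. jtp_factor q x m)"
  proof (intro exI allI impI)
    fix n assume "M \<le> n"
    then have split: "{1..n} = {1..M} \<union> {Suc M..n}"
      by auto
    have "(\<Prod>m\<in>{1..n}. jtp_factor q x m) = (\<Prod>m\<in>{1..M}. jtp_factor q x m) * (\<Prod>m\<in>{Suc M..n}. jtp_factor q x m)"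
      unfolding split by (rule prod.union_disjoint) auto
    also have "\<dots> \<le> (\<Prod>m\<in>{1..M}. jtp_factor q x m)"
      using nonneg tail by (intro mult_left_le prod_le_1 prod_nonneg) auto
    finally have "(\<Prod>m\<in>{1..n}. jtp_factor q x m) \<le> (\<Prod>m\<in>{1..M}. jtp_factor q x m)" .
    moreover have "cmod (of_real (1 - q ^ m) * (1 + x * of_real (q ^ m)) * (1 + of_real (q ^ m) / x))
        = jtp_factor q x m" for m
      unfolding jtp_factor_def norm_mult norm_of_real using q by (simp add: power_le_one)
    then have "cmod (\<Prod>m\<in>{1..n}. of_real (1 - q ^ m) * (1 + x * of_real (q ^ m)) * (1 + of_real (q ^ m) / x))
        = (\<Prod>m\<in>{1..n}. jtp_factor q x m)"
      by (simp only: prod_norm[symmetric])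
    ultimately show "cmod ((1 + 1 / x) * (\<Prod>m\<in>{1..n}.
        of_real (1 - q ^ m) * (1 + x * of_real (q ^ m)) * (1 + of_real (q ^ m) / x)))
        \<le> cmod (1 + 1 / x) * (\<Prod>m\<in>{1..M}. jtp_factor q x m)"
      by (simp add: norm_mult mult_left_mono)
  qed
qed

section \<open>Estimates on the circle of radius 3\<close>

lemma Re_le_on_arc:
  assumes "cmod x = 3" "3 * pi / 4 \<le> Arg x"
  shows "Re x \<le> - 53/25"
proof -
  have "cos (Arg x) \<le> cos (3 * pi / 4)"
    using assms(2) Arg_le_pi[of x] by (intro cos_monotone_0_pi_le) auto
  also have "cos (3 * pi / 4) = - (sqrt 2 / 2)"
    using cos_pi_minus[of "pi / 4"] by (simp add: cos_45)
  finally have cos_le: "cos (Arg x) \<le> - (sqrt 2 / 2)" .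
  have "sqrt ((1414/1000)\<^sup>2) \<le> sqrt 2"
    by (subst real_sqrt_le_iff) (simp add: power2_eq_square)
  then have "1414/1000 \<le> sqrt 2"
    by simp
  moreover have "Re x = 3 * cos (Arg x)"
    using cos_Arg[of x] assms(1) by (cases "x = 0") (simp_all add: mult.commute)
  ultimately show ?thesis
    using cos_le by linarith
qed

lemma norm_1_plus_mult_of_real_sq:
  "(cmod (1 + x * of_real t))\<^sup>2 = 1 + 2 * t * Re x + t\<^sup>2 * (cmod x)\<^sup>2"
  unfolding cmod_power2 by (simp add: power2_eq_square algebra_simps)

lemma norm_1_plus_of_real_div_sq:
  assumes "x \<noteq> 0"
  shows "(cmod (1 + of_real t / x))\<^sup>2 = 1 + 2 * t * Re x / (cmod x)\<^sup>2 + t\<^sup>2 / (cmod x)\<^sup>2"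
proof -
  have "1 + of_real t / x = (x + of_real t) / x"
    using assms by (simp add: field_simps)
  then have "cmod (1 + of_real t / x) = cmod (x + of_real t) / cmod x"
    by (simp add: norm_divide)
  moreover have "(cmod (x + of_real t))\<^sup>2 = (cmod x)\<^sup>2 + 2 * t * Re x + t\<^sup>2"
    unfolding cmod_power2 by (simp add: power2_eq_square algebra_simps)
  ultimately show ?thesis
    using assms by (simp add: power_divide add_divide_distrib)
qed

text \<open>For \<open>\<bar>x\<bar> = 3\<close>, \<open>Re x \<le> -53/25\<close> and \<open>t \<ge> 0\<close>, the two identities above bound \<open>\<bar>1 + x t\<bar>\<^sup>2\<close>
  and \<open>\<bar>1 + t / x\<bar>\<^sup>2\<close> by the following polynomials
  (\<open>424/100 = 2 \<cdot> 53/25\<close> and \<open>4711/10000 < 2 \<cdot> 53/25 / 9\<close>).\<close>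

definition arc_mult_bound :: "real \<Rightarrow> real" where
  "arc_mult_bound t = 1 - 424/100 * t + 9 * t\<^sup>2"

definition arc_div_bound :: "real \<Rightarrow> real" where
  "arc_div_bound t = 1 - 4711/10000 * t + t\<^sup>2 / 9"

definition arc_factor_bound :: "real \<Rightarrow> real" where
  "arc_factor_bound t = (1 - t)\<^sup>2 * arc_mult_bound t * arc_div_bound t"

lemma arc_mult_bound_pos: "0 < arc_mult_bound t"
proof -
  have "arc_mult_bound t = 9 * (t - 53/225)\<^sup>2 + 25344/50625"
    unfolding arc_mult_bound_def by (simp add: power2_eq_square algebra_simps)
  then show ?thesis
    using zero_le_power2[of "t - 53/225"] by linarith
qed

lemma arc_div_bound_pos: "0 < arc_div_bound t"
proof -
  have "arc_div_bound t = ((t - 42399/20000)\<^sup>2 + 1802324799/400000000) / 9"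
    unfolding arc_div_bound_def by (simp add: power2_eq_square algebra_simps)
  moreover have "0 < (t - 42399/20000)\<^sup>2 + 1802324799/400000000"
    by (rule add_nonneg_pos) auto
  ultimately show ?thesis
    by simp
qed

lemma arc_factor_bound_nonneg: "0 \<le> arc_factor_bound t"
  unfolding arc_factor_bound_def
  using arc_mult_bound_pos[of t] arc_div_bound_pos[of t] by simp

lemma arc_factor_bound_le_1:
  assumes "0 \<le> t" "t \<le> 1"
  shows "arc_factor_bound t \<le> 1"
proof -
  have div_le: "arc_div_bound t \<le> 1"
    using assms mult_left_le_one_le[of t t] unfolding arc_div_bound_def power2_eq_square by linarith
  have "(1 - t)\<^sup>2 * arc_mult_bound t \<le> 1"
  proof (cases "t \<le> 47/100")
    case True
    then have "9 * t * t \<le> 424/100 * t"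
      using assms by (intro mult_right_mono) auto
    then have "arc_mult_bound t \<le> 1"
      unfolding arc_mult_bound_def power2_eq_square by linarith
    moreover have "(1 - t)\<^sup>2 \<le> 1"
      using assms by (simp add: power_le_one)
    ultimately show ?thesis
      using arc_mult_bound_pos[of t] by (simp add: mult_le_one)
  next
    case False
    have "(1 - t)\<^sup>2 * arc_mult_bound t = (1 - t)\<^sup>2 * (1 - 424/100 * t) + 9 * (t * (1 - t))\<^sup>2"
      unfolding arc_mult_bound_def by (simp add: power2_eq_square algebra_simps)
    moreover have "(1 - t)\<^sup>2 * (1 - 424/100 * t) \<le> 0"
      using False by (intro mult_nonneg_nonpos) auto
    moreover have "(t * (1 - t))\<^sup>2 \<le> (1/4)\<^sup>2"
    proof (rule power_mono)
      show "t * (1 - t) \<le> 1/4"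
        using zero_le_power2[of "t - 1/2"] by (simp add: power2_eq_square algebra_simps)
    qed (use assms in simp)
    ultimately show ?thesis
      by (simp add: power2_eq_square)
  qed
  then show ?thesis
    unfolding arc_factor_bound_def
    using div_le arc_div_bound_pos[of t] mult_mono[of _ 1 _ 1] by fastforce
qed

lemma jtp_factor_sq_le_on_arc:
  assumes "0 \<le> q" "q \<le> 1" "cmod x = 3" "Re x \<le> - 53/25"
  shows "(jtp_factor q x m)\<^sup>2 \<le> arc_factor_bound (q ^ m)"
proof -
  define t where "t = q ^ m"
  have t: "0 \<le> t" "t \<le> 1"
    using assms by (simp_all add: t_def power_le_one)
  have "t * Re x \<le> t * (- 53/25)"
    using assms(4) t(1) by (rule mult_left_mono)
  moreover have "x \<noteq> 0"
    using assms(3) by auto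
  ultimately have "(cmod (1 + x * of_real t))\<^sup>2 \<le> arc_mult_bound t"
    and "(cmod (1 + of_real t / x))\<^sup>2 \<le> arc_div_bound t"
    using assms(3) t
    by (simp_all add: norm_1_plus_mult_of_real_sq norm_1_plus_of_real_div_sq arc_mult_bound_def
        arc_div_bound_def)
  then have "(1 - t)\<^sup>2 * (cmod (1 + x * of_real t))\<^sup>2 * (cmod (1 + of_real t / x))\<^sup>2 \<le> arc_factor_bound t"
    unfolding arc_factor_bound_def by (intro mult_mono) (auto simp: less_imp_le arc_mult_bound_pos)
  then show ?thesis
    by (simp add: jtp_factor_def t_def power_mult_distrib)
qed

lemma jtp_factor_le_1_on_arc:
  assumes "0 \<le> q" "q \<le> 1" "cmod x = 3" "Re x \<le> - 53/25"
  shows "jtp_factor q x m \<le> 1"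
proof -
  have "(jtp_factor q x m)\<^sup>2 \<le> arc_factor_bound (q ^ m)"
    by (rule jtp_factor_sq_le_on_arc[OF assms])
  also have "\<dots> \<le> 1\<^sup>2"
    using assms arc_factor_bound_le_1[of "q ^ m"] by (simp add: power_le_one)
  finally show ?thesis
    by (rule power2_le_imp_le) simp
qed

lemma arc_mult_bound_le_max:
  assumes "lo \<le> t" "t \<le> hi"
  shows "arc_mult_bound t \<le> max (arc_mult_bound lo) (arc_mult_bound hi)"
proof (cases "9 * (t + lo) \<le> 424/100")
  case True
  have "arc_mult_bound t - arc_mult_bound lo = (t - lo) * (9 * (t + lo) - 424/100)"
    unfolding arc_mult_bound_def by (simp add: power2_eq_square field_simps)
  moreover have "(t - lo) * (9 * (t + lo) - 424/100) \<le> 0"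
    using True assms by (intro mult_nonneg_nonpos) auto
  ultimately show ?thesis by simp
next
  case False
  have "arc_mult_bound t - arc_mult_bound hi = (t - hi) * (9 * (t + hi) - 424/100)"
    unfolding arc_mult_bound_def by (simp add: power2_eq_square field_simps)
  moreover have "(t - hi) * (9 * (t + hi) - 424/100) \<le> 0"
    using False assms by (intro mult_nonpos_nonneg) auto
  ultimately show ?thesis by simp
qed

lemma arc_div_bound_antimono:
  assumes "0 \<le> lo" "lo \<le> t" "t \<le> 1"
  shows "arc_div_bound t \<le> arc_div_bound lo"
proof -
  have "arc_div_bound t - arc_div_bound lo = (t - lo) * ((t + lo) / 9 - 4711/10000)"
    unfolding arc_div_bound_def by (simp add: power2_eq_square field_simps)
  moreover have "(t - lo) * ((t + lo) / 9 - 4711/10000) \<le> 0"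
    using assms by (intro mult_nonneg_nonpos) auto
  ultimately show ?thesis by simp
qed

definition arc_factor_bound_on :: "real \<Rightarrow> real \<Rightarrow> real" where
  "arc_factor_bound_on lo hi = (1 - lo)\<^sup>2 * max (arc_mult_bound lo) (arc_mult_bound hi) * arc_div_bound lo"

lemma arc_factor_bound_on_nonneg: "0 \<le> arc_factor_bound_on lo hi"
  unfolding arc_factor_bound_on_def
  using arc_mult_bound_pos[of lo] arc_div_bound_pos[of lo]
  by (intro mult_nonneg_nonneg) (auto simp: le_max_iff_disj)

lemma arc_factor_bound_le_on:
  assumes "0 \<le> lo" "lo \<le> t" "t \<le> hi" "hi \<le> 1"
  shows "arc_factor_bound t \<le> arc_factor_bound_on lo hi"
  unfolding arc_factor_bound_def arc_factor_bound_on_def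
proof (intro mult_mono)
  show "(1 - t)\<^sup>2 \<le> (1 - lo)\<^sup>2"
    using assms by (intro power_mono) auto
  show "arc_mult_bound t \<le> max (arc_mult_bound lo) (arc_mult_bound hi)"
    using assms by (intro arc_mult_bound_le_max) auto
  show "arc_div_bound t \<le> arc_div_bound lo"
    using assms by (intro arc_div_bound_antimono) auto
qed (use arc_mult_bound_pos[of t] arc_mult_bound_pos[of lo] arc_div_bound_pos[of t] in
     \<open>auto intro!: mult_nonneg_nonneg simp: le_max_iff_disj\<close>)

lemma arc_bound_prod_le_on:
  assumes "0 \<le> lo" "lo \<le> q" "q \<le> hi" "hi \<le> 1"
  shows "arc_div_bound 1 * arc_factor_bound q * arc_factor_bound (q ^ 2) * arc_factor_bound (q ^ 3)
    \<le> arc_div_bound 1 * arc_factor_bound_on lo hi * arc_factor_bound_on (lo ^ 2) (hi ^ 2)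
       * arc_factor_bound_on (lo ^ 3) (hi ^ 3)"
proof -
  have "arc_factor_bound (q ^ k) \<le> arc_factor_bound_on (lo ^ k) (hi ^ k)" for k
    using assms by (intro arc_factor_bound_le_on power_mono power_le_one) auto
  from this[of 1] this[of 2] this[of 3] show ?thesis
    using arc_div_bound_pos[of 1] arc_factor_bound_nonneg arc_factor_bound_on_nonneg
    by (intro mult_mono) (auto intro: mult_nonneg_nonneg less_imp_le)
qed

lemma arc_bound_prod_lt:
  assumes "1/2 \<le> q" "q < 1"
  shows "arc_div_bound 1 * arc_factor_bound q * arc_factor_bound (q ^ 2) * arc_factor_bound (q ^ 3) < 1/36"
proof -
  have on_interval: "arc_div_bound 1 * arc_factor_bound q * arc_factor_bound (q ^ 2) * arc_factor_bound (q ^ 3) < 1/36"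
    if "0 \<le> lo" "lo \<le> q" "q \<le> hi" "hi \<le> 1"
      and "arc_div_bound 1 * arc_factor_bound_on lo hi * arc_factor_bound_on (lo ^ 2) (hi ^ 2)
             * arc_factor_bound_on (lo ^ 3) (hi ^ 3) < 1/36" for lo hi
    using arc_bound_prod_le_on[OF that(1-4)] that(5) by linarith
  note numerals = arc_factor_bound_on_def arc_mult_bound_def arc_div_bound_def power2_eq_square
    eval_nat_numeral
  consider "q \<le> 11/20" | "11/20 \<le> q" "q \<le> 13/20" | "13/20 \<le> q" "q \<le> 7/10"
    | "7/10 \<le> q" "q \<le> 3/4" | "3/4 \<le> q" "q \<le> 4/5" | "4/5 \<le> q" "q \<le> 17/20"
    | "17/20 \<le> q" "q \<le> 9/10" | "9/10 \<le> q"
    by linarith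
  then show ?thesis
  proof cases
    case 1 then show ?thesis using assms by (intro on_interval[of "1/2" "11/20"]) (auto simp: numerals)
  next
    case 2 then show ?thesis by (intro on_interval[of "11/20" "13/20"]) (auto simp: numerals)
  next
    case 3 then show ?thesis by (intro on_interval[of "13/20" "7/10"]) (auto simp: numerals)
  next
    case 4 then show ?thesis by (intro on_interval[of "7/10" "3/4"]) (auto simp: numerals)
  next
    case 5 then show ?thesis by (intro on_interval[of "3/4" "4/5"]) (auto simp: numerals)
  next
    case 6 then show ?thesis by (intro on_interval[of "4/5" "17/20"]) (auto simp: numerals)
  next
    case 7 then show ?thesis by (intro on_interval[of "17/20" "9/10"]) (auto simp: numerals)
  next
    case 8 then show ?thesis using assms by (intro on_interval[of "9/10" "1"]) (auto simp: numerals)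
  qed
qed

lemma arc_partial_prod_lt:
  assumes "1/2 \<le> q" "q < 1" "cmod x = 3" "Re x \<le> - 53/25"
  shows "cmod (1 + 1 / x) * (\<Prod>m\<in>{1..3}. jtp_factor q x m) < 1/6"
proof -
  define K where "K = cmod (1 + 1 / x) * jtp_factor q x 1 * jtp_factor q x 2 * jtp_factor q x 3"
  have q: "0 \<le> q" "q \<le> 1"
    using assms by auto
  have prod3: "(\<Prod>m\<in>{1..3}. jtp_factor q x m) = jtp_factor q x 1 * jtp_factor q x 2 * jtp_factor q x 3"
    by (simp add: eval_nat_numeral atLeastAtMostSuc_conv mult_ac)
  have factor: "(jtp_factor q x m)\<^sup>2 \<le> arc_factor_bound (q ^ m)" for m
    by (rule jtp_factor_sq_le_on_arc[OF q assms(3,4)])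
  have "x \<noteq> 0"
    using assms(3) by auto
  then have "(cmod (1 + of_real 1 / x))\<^sup>2 = 1 + 2 * 1 * Re x / (cmod x)\<^sup>2 + 1\<^sup>2 / (cmod x)\<^sup>2"
    by (rule norm_1_plus_of_real_div_sq)
  then have "(cmod (1 + 1 / x))\<^sup>2 = 1 + 2 * Re x / 9 + 1 / 9"
    using assms(3) by simp
  then have "(cmod (1 + 1 / x))\<^sup>2 \<le> arc_div_bound 1"
    using assms(4) by (simp add: arc_div_bound_def)
  then have "K\<^sup>2 \<le> arc_div_bound 1 * arc_factor_bound (q ^ 1) * arc_factor_bound (q ^ 2) * arc_factor_bound (q ^ 3)"
    unfolding K_def power_mult_distrib using factor[of 1] factor[of 2] factor[of 3] arc_div_bound_pos[of 1]
    by (intro mult_mono) (auto intro!: mult_nonneg_nonneg arc_factor_bound_nonneg)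
  also have "\<dots> < (1/6)\<^sup>2"
    using arc_bound_prod_lt[OF assms(1,2)] by (simp add: power2_eq_square)
  finally have "K < 1/6"
    by (rule power_less_imp_less_base) simp
  then show ?thesis
    unfolding prod3 K_def by (simp only: mult.assoc)
qed

lemma norm_theta_term_neg_index_le:
  assumes "0 \<le> q" "q \<le> 1" "cmod x = 3"
  shows "norm (theta_term q x (- int k - 1)) \<le> (1/3) ^ Suc k"
proof -
  have "q ^ (Suc k choose 2) \<le> 1"
    using assms by (simp add: power_le_one)
  then have "q ^ (Suc k choose 2) / 3 ^ Suc k \<le> 1 / 3 ^ Suc k"
    by (simp add: divide_right_mono)
  then show ?thesis
    using assms by (simp add: theta_term_neg_index norm_divide norm_mult norm_power power_one_over)
qed

lemma norm_Gfun_ge: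
  assumes q: "0 < q" "q < 1" and x: "cmod x = 3"
  shows "1/6 \<le> cmod (Gfun q x)"
proof -
  define f where "f k = theta_term q x (- int k - 1)" for k
  have x0: "x \<noteq> 0"
    using x by auto
  have summable: "summable (\<lambda>k. norm (f k))"
    unfolding f_def by (rule summable_norm_theta_term_neg_index[OF q x0])
  have G: "Gfun q x = (\<Sum>n. f (n + 2)) + (f 0 + f 1)"
    unfolding Gfun_eq_suminf[OF q x0] f_def[symmetric]
    using suminf_split_initial_segment[OF summable_norm_cancel[OF summable], of 2]
    by (simp add: eval_nat_numeral)
  have "f 0 = 1 / x" "f 1 = of_real q / x ^ 2"
    unfolding f_def using theta_term_neg_index[of q x 0] theta_term_neg_index[of q x 1]
    by (simp_all add: binomial_eq_0 numeral_2_eq_2 power2_eq_square)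
  then have "f 0 + f 1 = (x + of_real q) / x ^ 2"
    using x0 by (simp add: field_simps power2_eq_square)
  then have "cmod (f 0 + f 1) = cmod (x + of_real q) / 9"
    using x by (simp add: norm_divide norm_power)
  moreover have "3 \<le> cmod (x + of_real q) + q"
    using norm_triangle_ineq4[of "x + of_real q" "of_real q"] x q by simp
  ultimately have head: "2/9 \<le> cmod (f 0 + f 1)"
    using q by simp
  have "norm (\<Sum>n. f (n + 2)) \<le> (\<Sum>n. norm (f (n + 2)))"
    using summable_ignore_initial_segment[OF summable, of 2] by (rule summable_norm)
  also have "\<dots> \<le> (\<Sum>n. 1/27 * (1/3) ^ n)"
  proof (rule suminf_le)
    show "norm (f (n + 2)) \<le> 1/27 * (1/3) ^ n" for n
      using norm_theta_term_neg_index_le[of q x "n + 2"] q x by (simp add: f_def power_add)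
  qed (use summable_ignore_initial_segment[OF summable, of 2] in \<open>auto intro: summable_mult summable_geometric\<close>)
  also have "\<dots> = 1/18"
    by (subst suminf_mult[OF summable_geometric]) (auto simp: suminf_geometric)
  finally have tail: "norm (\<Sum>n. f (n + 2)) \<le> 1/18" .
  have "cmod (f 0 + f 1) \<le> cmod (Gfun q x) + norm (\<Sum>n. f (n + 2))"
    unfolding G using norm_triangle_ineq4[of "(\<Sum>n. f (n + 2)) + (f 0 + f 1)" "\<Sum>n. f (n + 2)"]
    by (simp add: add.commute)
  then show ?thesis
    using head tail by linarith
qed

theorem lemma5:
  fixes q :: real and x :: complex
  assumes "0.5 \<le> q" and "q < 1"
    and "cmod x = 3" and "3 * pi / 4 \<le> Arg x" and "Arg x \<le> pi"
  shows "cmod (Gfun q x) > cmod (Theta_star q x) \<and> cmod (ptheta q x) > 0"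
proof -
  have q: "0 < q" "q < 1" and x: "x \<noteq> 0"
    using assms(1-3) by auto
  have Re: "Re x \<le> - 53/25"
    using Re_le_on_arc assms(3,4) .
  have "cmod (Theta_star q x) \<le> cmod (1 + 1 / x) * (\<Prod>m\<in>{1..3}. jtp_factor q x m)"
    using q assms(3) Re by (intro norm_Theta_star_le_partial_prod[OF q x] jtp_factor_le_1_on_arc) auto
  also have "\<dots> < 1/6"
    using arc_partial_prod_lt[of q x] assms(1-3) Re by simp
  also have "\<dots> \<le> cmod (Gfun q x)"
    using norm_Gfun_ge[OF q assms(3)] .
  finally have G_gt: "cmod (Gfun q x) > cmod (Theta_star q x)" .
  have "ptheta q x = Theta_star q x - Gfun q x"
    using Theta_star_eq_ptheta_plus_Gfun[OF q x] by simp
  then have "cmod (Gfun q x) - cmod (Theta_star q x) \<le> cmod (ptheta q x)"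
    using norm_triangle_ineq3[of "Gfun q x" "Theta_star q x"] by (simp add: norm_minus_commute)
  then show ?thesis
    using G_gt by linarith
qed

end
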